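(* Let $a_{n,k}$ denote the number of matchings of size $n$ containing exactly $k$ occurrences of the endhered pattern $21$. For any integers $n>k\ge0$, $$a_{n,k}=\binom{n-1}{k}a_{n-k,0}.$$
   Context: A matching of size $n$ is a set of $n$ arcs $(a,b)$ with $1\le a<b\le 2n$ such that each point of $\{1,\dots,2n\}$ belongs to exactly one arc. An occurrence of the endhered pattern $21$ in a matching $\mu$ is a pair of arcs of $\mu$ of the form $(i+1,j+2),(i+2,j+1)$ (two nested arcs with consecutive starting points and consecutive ending points); the number of occurrences is the number of such pairs. *)

theory Defs
  imports Main
begin

definition is_matching :: "nat \<Rightarrow> (nat \<times> nat) set \<Rightarrow> bool" where
  "is_matching n \<mu> \<longleftrightarrow>
     (\<forall>(a,b)\<in>\<mu>. 1 \<le> a \<and> a < b \<and> b \<le> 2*n) \<and>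
     (\<forall>p\<in>{1..2*n}. \<exists>!e. e \<in> \<mu> \<and> (fst e = p \<or> snd e = p))"

definition matchings :: "nat \<Rightarrow> (nat \<times> nat) set set" where
  "matchings n = {\<mu>. is_matching n \<mu>}"

definition occ21 :: "(nat \<times> nat) set \<Rightarrow> nat" where
  "occ21 \<mu> = card {(i,j). (i+1, j+2) \<in> \<mu> \<and> (i+2, j+1) \<in> \<mu>}"

definition a_nk :: "nat \<Rightarrow> nat \<Rightarrow> nat" where
  "a_nk n k = card {\<mu> \<in> matchings n. occ21 \<mu> = k}"

end

theory Submission
  imports Defs
begin

(* Doubling an arc (a, b) of a matching, i.e. replacing it by the nested pair (a, b + 2),
   (a + 1, b + 1) and relabelling the other points accordingly, creates exactly one new occurrence
   of 21 and keeps all the others.  Conversely, merging the two arcs of an occurrence undoes the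
   doubling, so pairs (matching of size n with k occurrences, one of its occurrences) correspond
   bijectively to pairs (matching of size n - 1 with k - 1 occurrences, one of its n - 1 arcs).
   Hence k a(n, k) = (n - 1) a(n - 1, k - 1), and the formula follows by induction on k from
   k C(n - 1, k) = (n - 1) C(n - 2, k - 1). *)

section \<open>Perfect matchings of a set of points\<close>

definition perfect_matching_on :: "'a::linorder set \<Rightarrow> ('a \<times> 'a) set \<Rightarrow> bool" where
  "perfect_matching_on P \<mu> \<longleftrightarrow>
     (\<forall>(x, y)\<in>\<mu>. x < y \<and> x \<in> P \<and> y \<in> P) \<and>
     (\<forall>p\<in>P. \<exists>!e. e \<in> \<mu> \<and> (fst e = p \<or> snd e = p))"

lemma is_matching_iff_perfect_matching_on:
  "is_matching n \<mu> \<longleftrightarrow> perfect_matching_on {1..2 * n} \<mu>"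
proof -
  have "(\<forall>(x, y)\<in>\<mu>. 1 \<le> x \<and> x < y \<and> y \<le> 2 * n) \<longleftrightarrow>
        (\<forall>(x, y)\<in>\<mu>. x < y \<and> x \<in> {1..2 * n} \<and> y \<in> {1..2 * n})"
    by auto
  then show ?thesis
    unfolding is_matching_def perfect_matching_on_def by simp
qed

lemma perfect_matching_onI:
  assumes "\<And>x y. (x, y) \<in> \<mu> \<Longrightarrow> x < y \<and> x \<in> P \<and> y \<in> P"
    and "\<And>p. p \<in> P \<Longrightarrow> \<exists>x y. (x, y) \<in> \<mu> \<and> (p = x \<or> p = y)"
    and "\<And>x y u v. (x, y) \<in> \<mu> \<Longrightarrow> (u, v) \<in> \<mu> \<Longrightarrow> x = u \<or> x = v \<or> y = u \<or> y = v \<Longrightarrow>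
           (x, y) = (u, v)"
  shows "perfect_matching_on P \<mu>"
  unfolding perfect_matching_on_def
proof (intro conjI ballI)
  show "case e of (x, y) \<Rightarrow> x < y \<and> x \<in> P \<and> y \<in> P" if "e \<in> \<mu>" for e
    using assms(1) that by (cases e) simp
  show "\<exists>!e. e \<in> \<mu> \<and> (fst e = p \<or> snd e = p)" if p: "p \<in> P" for p
  proof -
    obtain x y where xy: "(x, y) \<in> \<mu>" "p = x \<or> p = y"
      using assms(2)[OF p] by blast
    show ?thesis
    proof (rule ex1I[of _ "(x, y)"])
      show "(x, y) \<in> \<mu> \<and> (fst (x, y) = p \<or> snd (x, y) = p)"
        using xy by auto
      fix e assume "e \<in> \<mu> \<and> (fst e = p \<or> snd e = p)"
      then show "e = (x, y)"
        using assms(3)[of "fst e" "snd e" x y] xy by auto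
    qed
  qed
qed

context
  fixes P :: "'a::linorder set" and \<mu> :: "('a \<times> 'a) set"
  assumes pm: "perfect_matching_on P \<mu>"
begin

lemma perfect_matching_on_arcD: "(x, y) \<in> \<mu> \<Longrightarrow> x < y \<and> x \<in> P \<and> y \<in> P"
  using pm unfolding perfect_matching_on_def by fast

lemma perfect_matching_on_subset: "\<mu> \<subseteq> P \<times> P"
  by (auto dest: perfect_matching_on_arcD)

lemma perfect_matching_on_cover:
  assumes "p \<in> P"
  shows "\<exists>x y. (x, y) \<in> \<mu> \<and> (p = x \<or> p = y)"
proof -
  obtain e where "e \<in> \<mu>" "fst e = p \<or> snd e = p"
    using pm assms unfolding perfect_matching_on_def by blast
  then show ?thesis
    by (intro exI[of _ "fst e"] exI[of _ "snd e"]) auto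
qed

lemma perfect_matching_on_arc_eq:
  assumes "(x, y) \<in> \<mu>" "(u, v) \<in> \<mu>" "x = u \<or> x = v \<or> y = u \<or> y = v"
  shows "(x, y) = (u, v)"
proof -
  obtain p where p: "p = x \<or> p = y" "p = u \<or> p = v"
    using assms(3) by blast
  then have "p \<in> P"
    using perfect_matching_on_arcD[OF assms(1)] by blast
  then have "\<exists>!e. e \<in> \<mu> \<and> (fst e = p \<or> snd e = p)"
    using pm unfolding perfect_matching_on_def by blast
  then show ?thesis
    using assms(1,2) p by (metis fst_conv snd_conv)
qed

lemma perfect_matching_on_left_end_iff: "(x, y) \<in> \<mu> \<Longrightarrow> (x, q) \<in> \<mu> \<longleftrightarrow> q = y"
  using perfect_matching_on_arc_eq[of x q x y] by blast

lemma perfect_matching_on_right_end_iff: "(x, y) \<in> \<mu> \<Longrightarrow> (p, y) \<in> \<mu> \<longleftrightarrow> p = x"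
  using perfect_matching_on_arc_eq[of p y x y] by blast

lemma perfect_matching_on_left_end_not_right: "(x, y) \<in> \<mu> \<Longrightarrow> (p, x) \<notin> \<mu>"
  using perfect_matching_on_arc_eq[of p x x y] perfect_matching_on_arcD[of x y] by blast

lemma perfect_matching_on_Diff:
  assumes "(x, y) \<in> \<mu>"
  shows "perfect_matching_on (P - {x, y}) (\<mu> - {(x, y)})"
proof (rule perfect_matching_onI)
  show "u < v \<and> u \<in> P - {x, y} \<and> v \<in> P - {x, y}" if "(u, v) \<in> \<mu> - {(x, y)}" for u v
    using that perfect_matching_on_arcD perfect_matching_on_arc_eq[OF assms, of u v] by blast
  show "\<exists>u v. (u, v) \<in> \<mu> - {(x, y)} \<and> (p = u \<or> p = v)" if "p \<in> P - {x, y}" for p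
    using that perfect_matching_on_cover by fastforce
qed (use perfect_matching_on_arc_eq in blast)

lemma perfect_matching_on_insert:
  assumes "x < y" "x \<notin> P" "y \<notin> P"
  shows "perfect_matching_on (insert x (insert y P)) (insert (x, y) \<mu>)"
proof (rule perfect_matching_onI)
  show "u < v \<and> u \<in> insert x (insert y P) \<and> v \<in> insert x (insert y P)"
    if "(u, v) \<in> insert (x, y) \<mu>" for u v
    using that assms(1) perfect_matching_on_arcD by blast
  show "\<exists>u v. (u, v) \<in> insert (x, y) \<mu> \<and> (p = u \<or> p = v)"
    if "p \<in> insert x (insert y P)" for p
    using that perfect_matching_on_cover by blast
  show "(u, v) = (u', v')"
    if "(u, v) \<in> insert (x, y) \<mu>" "(u', v') \<in> insert (x, y) \<mu>"
      "u = u' \<or> u = v' \<or> v = u' \<or> v = v'" for u v u' v'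
    using that assms(2,3) perfect_matching_on_arcD perfect_matching_on_arc_eq by blast
qed

lemma perfect_matching_on_image:
  assumes "strict_mono f"
  shows "perfect_matching_on (f ` P) (map_prod f f ` \<mu>)"
proof (rule perfect_matching_onI)
  fix x y assume "(x, y) \<in> map_prod f f ` \<mu>"
  then obtain x0 y0 where "(x0, y0) \<in> \<mu>" "x = f x0" "y = f y0"
    by auto
  then show "x < y \<and> x \<in> f ` P \<and> y \<in> f ` P"
    using perfect_matching_on_arcD strict_monoD[OF assms] by blast
next
  fix p assume "p \<in> f ` P"
  then obtain p0 where "p0 \<in> P" "p = f p0"
    by blast
  then obtain x0 y0 where "(x0, y0) \<in> \<mu>" "p0 = x0 \<or> p0 = y0"
    using perfect_matching_on_cover by blast
  then show "\<exists>x y. (x, y) \<in> map_prod f f ` \<mu> \<and> (p = x \<or> p = y)"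
    using \<open>p = f p0\<close> by force
next
  fix x y u v assume "(x, y) \<in> map_prod f f ` \<mu>" "(u, v) \<in> map_prod f f ` \<mu>"
    and shared: "x = u \<or> x = v \<or> y = u \<or> y = v"
  then obtain x0 y0 u0 v0 where arcs: "(x0, y0) \<in> \<mu>" "(u0, v0) \<in> \<mu>"
    and images: "x = f x0" "y = f y0" "u = f u0" "v = f v0"
    by auto
  have "x0 = u0 \<or> x0 = v0 \<or> y0 = u0 \<or> y0 = v0"
    using shared unfolding images strict_mono_eq[OF assms] .
  then show "(x, y) = (u, v)"
    using perfect_matching_on_arc_eq[OF arcs] images by simp
qed

lemma perfect_matching_on_vimage:
  assumes "strict_mono f" "P \<subseteq> range f"
  shows "perfect_matching_on (f -` P) (map_prod f f -` \<mu>)"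
proof (rule perfect_matching_onI)
  fix x y assume "(x, y) \<in> map_prod f f -` \<mu>"
  then show "x < y \<and> x \<in> f -` P \<and> y \<in> f -` P"
    using perfect_matching_on_arcD strict_mono_less[OF assms(1)] by auto
next
  fix p assume "p \<in> f -` P"
  then obtain u v where uv: "(u, v) \<in> \<mu>" "f p = u \<or> f p = v"
    using perfect_matching_on_cover by blast
  moreover obtain x y where "u = f x" "v = f y"
    using uv(1) perfect_matching_on_arcD assms(2) by blast
  ultimately show "\<exists>x y. (x, y) \<in> map_prod f f -` \<mu> \<and> (p = x \<or> p = y)"
    using strict_mono_eq[OF assms(1)] by auto
next
  fix x y u v assume "(x, y) \<in> map_prod f f -` \<mu>" "(u, v) \<in> map_prod f f -` \<mu>"
    and "x = u \<or> x = v \<or> y = u \<or> y = v"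
  then show "(x, y) = (u, v)"
    using perfect_matching_on_arc_eq[of "f x" "f y" "f u" "f v"] strict_mono_eq[OF assms(1)]
    by auto
qed

lemma card_perfect_matching_on:
  assumes "finite P"
  shows "card P = 2 * card \<mu>"
proof -
  have arc_eq: "e = e'"
    if "e \<in> \<mu>" "e' \<in> \<mu>" "fst e = fst e' \<or> fst e = snd e' \<or> snd e = snd e'" for e e'
  proof -
    have "(fst e, snd e) = (fst e', snd e')"
      using that by (intro perfect_matching_on_arc_eq) auto
    then show ?thesis by simp
  qed
  have fin: "finite \<mu>"
    using assms perfect_matching_on_subset finite_subset by blast
  have inj: "inj_on fst \<mu>" "inj_on snd \<mu>"
    unfolding inj_on_def using arc_eq by blast+
  have "P \<subseteq> fst ` \<mu> \<union> snd ` \<mu>"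
  proof
    fix p assume "p \<in> P"
    then obtain x y where "(x, y) \<in> \<mu>" "p = x \<or> p = y"
      using perfect_matching_on_cover by blast
    then show "p \<in> fst ` \<mu> \<union> snd ` \<mu>"
      by (metis UnI1 UnI2 fst_conv snd_conv rev_image_eqI)
  qed
  moreover have "fst ` \<mu> \<union> snd ` \<mu> \<subseteq> P"
    by (auto dest: perfect_matching_on_arcD)
  moreover have "fst e \<noteq> snd e'" if "e \<in> \<mu>" "e' \<in> \<mu>" for e e'
    using that arc_eq[of e e'] perfect_matching_on_arcD[of "fst e" "snd e"] by auto
  then have "fst ` \<mu> \<inter> snd ` \<mu> = {}"
    by blast
  ultimately have "card P = card (fst ` \<mu>) + card (snd ` \<mu>)"
    using fin card_Un_disjoint[of "fst ` \<mu>" "snd ` \<mu>"] by (simp add: subset_antisym)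
  then show ?thesis
    using inj by (simp add: card_image)
qed

end

lemma matching_arc_less: "is_matching n \<mu> \<Longrightarrow> (x, y) \<in> \<mu> \<Longrightarrow> x < y"
  unfolding is_matching_def by blast

lemma matching_arcs_pos: "is_matching n \<mu> \<Longrightarrow> \<forall>(x, y)\<in>\<mu>. 0 < x \<and> x < y"
  unfolding is_matching_def by auto

lemma finite_matching: "is_matching n \<mu> \<Longrightarrow> finite \<mu>"
  unfolding is_matching_iff_perfect_matching_on
  by (metis finite_SigmaI finite_atLeastAtMost finite_subset perfect_matching_on_subset)

lemma card_matching: "is_matching n \<mu> \<Longrightarrow> card \<mu> = n"
  unfolding is_matching_iff_perfect_matching_on
  using card_perfect_matching_on[of "{1..2 * n}" \<mu>] by simp

lemma finite_matchings: "finite (matchings n)"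
proof -
  have "matchings n \<subseteq> Pow ({1..2 * n} \<times> {1..2 * n})"
    unfolding matchings_def is_matching_iff_perfect_matching_on
    using perfect_matching_on_subset by blast
  then show ?thesis
    by (rule finite_subset) simp
qed

section \<open>Doubling an arc\<close>

(* The order-preserving relabelling of the old points when new points are inserted right after
   a and right after b, i.e. at the positions a + 1 and b + 2. *)
definition stretch :: "nat \<Rightarrow> nat \<Rightarrow> nat \<Rightarrow> nat" where
  "stretch a b p = p + (if a < p then 1 else 0) + (if b < p then 1 else 0)"

lemma strict_mono_stretch: "strict_mono (stretch a b)"
  unfolding strict_mono_def stretch_def by auto

lemma stretch_inject [simp]: "stretch a b x = stretch a b y \<longleftrightarrow> x = y"
  using strict_mono_eq[OF strict_mono_stretch] .

lemma inj_map_prod_stretch: "inj (map_prod (stretch a b) (stretch a b))"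
  using map_prod_inj_on[of "stretch a b" UNIV "stretch a b" UNIV] by (simp add: inj_def)

lemma stretch_Suc: "p \<noteq> a \<Longrightarrow> p \<noteq> b \<Longrightarrow> stretch a b (Suc p) = Suc (stretch a b p)"
  unfolding stretch_def by auto

lemma stretch_diff_Suc:
  "0 < q \<Longrightarrow> q - 1 \<noteq> a \<Longrightarrow> q - 1 \<noteq> b \<Longrightarrow> stretch a b q - 1 = stretch a b (q - 1)"
  unfolding stretch_def by auto

context
  fixes a b :: nat
  assumes ab: "a < b"
begin

lemma stretch_eq_left_iff: "stretch a b p = a \<longleftrightarrow> p = a"
  using ab unfolding stretch_def by auto

lemma stretch_left: "stretch a b a = a" and stretch_right: "stretch a b b = Suc b"
  using ab unfolding stretch_def by auto

lemma stretch_Suc_left: "stretch a b (Suc a) = Suc (Suc a)"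
  and stretch_Suc_right: "stretch a b (Suc b) = b + 3"
  using ab unfolding stretch_def by auto

lemma stretch_neq_new_points:
  "stretch a b p \<noteq> Suc a" "stretch a b p \<noteq> b + 2"
  "Suc a \<noteq> stretch a b p" "b + 2 \<noteq> stretch a b p"
  using ab unfolding stretch_def by auto

lemma range_stretch: "range (stretch a b) = - {Suc a, b + 2}"
proof
  show "range (stretch a b) \<subseteq> - {Suc a, b + 2}"
    using stretch_neq_new_points by auto
  show "- {Suc a, b + 2} \<subseteq> range (stretch a b)"
  proof
    fix q assume "q \<in> - {Suc a, b + 2}"
    then have "q = stretch a b (q - (if a < q then 1 else 0) - (if Suc b < q then 1 else 0))"
      using ab unfolding stretch_def by auto
    then show "q \<in> range (stretch a b)"
      by blast
  qed
qed

lemma range_map_prod_stretch: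
  "range (map_prod (stretch a b) (stretch a b)) = (- {Suc a, b + 2}) \<times> (- {Suc a, b + 2})"
  using map_prod_surj_on[OF range_stretch range_stretch] by simp

lemma vimage_stretch_interval:
  assumes "b \<le> 2 * n"
  shows "stretch a b -` ({1..2 * Suc n} - {a, Suc a, Suc b, b + 2}) = {1..2 * n} - {a, b}"
  using ab assms unfolding stretch_def by (auto split: if_splits)

end

definition arc_shift :: "nat \<Rightarrow> nat \<Rightarrow> nat \<times> nat \<Rightarrow> nat \<times> nat" where
  "arc_shift a b e =
     (if e = (a, b) then (Suc a, Suc b) else map_prod (stretch a b) (stretch a b) e)"

definition double_arc :: "(nat \<times> nat) set \<Rightarrow> nat \<Rightarrow> nat \<Rightarrow> (nat \<times> nat) set" where
  "double_arc \<nu> a b = insert (a, b + 2) (arc_shift a b ` \<nu>)"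

(* The arcs (a, b + 2) and (a + 1, b + 1) through the new points have no preimage under
   stretch; they are replaced by (a, b). *)
definition merge_arcs :: "(nat \<times> nat) set \<Rightarrow> nat \<Rightarrow> nat \<Rightarrow> (nat \<times> nat) set" where
  "merge_arcs \<mu> a b = insert (a, b) (map_prod (stretch a b) (stretch a b) -` \<mu>)"

lemma double_arc_eq:
  assumes "(a, b) \<in> \<nu>"
  shows "double_arc \<nu> a b = insert (a, b + 2)
    (insert (Suc a, Suc b) (map_prod (stretch a b) (stretch a b) ` (\<nu> - {(a, b)})))"
proof -
  have "arc_shift a b ` \<nu> = arc_shift a b ` insert (a, b) (\<nu> - {(a, b)})"
    using assms by (simp add: insert_absorb)
  also have "\<dots> = insert (Suc a, Suc b)
      (map_prod (stretch a b) (stretch a b) ` (\<nu> - {(a, b)}))"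
    unfolding arc_shift_def by (auto intro!: image_cong)
  finally show ?thesis
    unfolding double_arc_def by simp
qed

lemma double_arc_mem_outer: "(a, b + 2) \<in> double_arc \<nu> a b"
  unfolding double_arc_def by simp

lemma double_arc_mem_inner: "(a, b) \<in> \<nu> \<Longrightarrow> (Suc a, Suc b) \<in> double_arc \<nu> a b"
  unfolding double_arc_def arc_shift_def by force

lemma stretch_mem_double_arc_iff:
  assumes "a < b" "(a, b) \<in> \<nu>"
  shows "(stretch a b u, stretch a b v) \<in> double_arc \<nu> a b \<longleftrightarrow> (u, v) \<in> \<nu> \<and> (u, v) \<noteq> (a, b)"
  unfolding double_arc_eq[OF assms(2)] using stretch_neq_new_points[OF assms(1)] by auto

lemma is_matching_double_arc:
  assumes \<nu>: "is_matching n \<nu>" and ab: "(a, b) \<in> \<nu>"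
  shows "is_matching (Suc n) (double_arc \<nu> a b)"
proof -
  let ?s = "stretch a b"
  let ?Q = "{1..2 * Suc n} - {a, Suc a, Suc b, b + 2}"
  have pm: "perfect_matching_on {1..2 * n} \<nu>"
    using \<nu> by (simp add: is_matching_iff_perfect_matching_on)
  have bounds: "1 \<le> a" "a < b" "b \<le> 2 * n"
    using perfect_matching_on_arcD[OF pm ab] by auto
  have "?Q \<subseteq> range ?s"
    using range_stretch[OF bounds(2)] by auto
  then have "?s ` ({1..2 * n} - {a, b}) = ?Q"
    unfolding vimage_stretch_interval[OF bounds(2,3), symmetric] by (simp add: Int_absorb2)
  moreover have "perfect_matching_on (?s ` ({1..2 * n} - {a, b}))
      (map_prod ?s ?s ` (\<nu> - {(a, b)}))"
    using perfect_matching_on_Diff[OF pm ab] strict_mono_stretch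
    by (rule perfect_matching_on_image)
  ultimately have "perfect_matching_on ?Q (map_prod ?s ?s ` (\<nu> - {(a, b)}))"
    by simp
  then have "perfect_matching_on (insert a (insert (b + 2) (insert (Suc a) (insert (Suc b) ?Q))))
      (double_arc \<nu> a b)"
    unfolding double_arc_eq[OF ab] using bounds
    by (intro perfect_matching_on_insert) auto
  moreover have "insert a (insert (b + 2) (insert (Suc a) (insert (Suc b) ?Q))) = {1..2 * Suc n}"
    using bounds by auto
  ultimately show ?thesis
    by (simp add: is_matching_iff_perfect_matching_on)
qed

lemma is_matching_merge_arcs:
  assumes \<mu>: "is_matching (Suc n) \<mu>"
    and outer: "(a, b + 2) \<in> \<mu>" and inner: "(Suc a, Suc b) \<in> \<mu>"
  shows "is_matching n (merge_arcs \<mu> a b)"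
proof -
  let ?s = "stretch a b"
  let ?Q = "{1..2 * Suc n} - {a, Suc a, Suc b, b + 2}"
  let ?\<mu>' = "\<mu> - {(a, b + 2)} - {(Suc a, Suc b)}"
  have pm: "perfect_matching_on {1..2 * Suc n} \<mu>"
    using \<mu> by (simp add: is_matching_iff_perfect_matching_on)
  have bounds: "1 \<le> a" "a < b" "b \<le> 2 * n"
    using perfect_matching_on_arcD[OF pm outer] perfect_matching_on_arcD[OF pm inner] by auto
  have "perfect_matching_on ({1..2 * Suc n} - {a, b + 2} - {Suc a, Suc b}) ?\<mu>'"
    using inner by (intro perfect_matching_on_Diff[OF perfect_matching_on_Diff[OF pm outer]]) auto
  moreover have "{1..2 * Suc n} - {a, b + 2} - {Suc a, Suc b} = ?Q"
    by auto
  moreover have "?Q \<subseteq> range ?s"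
    using range_stretch[OF bounds(2)] by auto
  ultimately have "perfect_matching_on (?s -` ?Q) (map_prod ?s ?s -` ?\<mu>')"
    using strict_mono_stretch perfect_matching_on_vimage by metis
  moreover have "map_prod ?s ?s -` ?\<mu>' = map_prod ?s ?s -` \<mu>"
    using stretch_neq_new_points[OF bounds(2)] by auto
  ultimately have "perfect_matching_on ({1..2 * n} - {a, b}) (map_prod ?s ?s -` \<mu>)"
    using vimage_stretch_interval[OF bounds(2,3)] by simp
  then have "perfect_matching_on (insert a (insert b ({1..2 * n} - {a, b}))) (merge_arcs \<mu> a b)"
    unfolding merge_arcs_def using bounds(2) by (rule perfect_matching_on_insert) auto
  moreover have "insert a (insert b ({1..2 * n} - {a, b})) = {1..2 * n}"
    using bounds by auto
  ultimately show ?thesis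
    by (simp add: is_matching_iff_perfect_matching_on)
qed

lemma merge_arcs_double_arc:
  assumes "a < b" "(a, b) \<in> \<nu>"
  shows "merge_arcs (double_arc \<nu> a b) a b = \<nu>"
proof -
  let ?f = "map_prod (stretch a b) (stretch a b)"
  have "?f -` double_arc \<nu> a b = ?f -` (?f ` (\<nu> - {(a, b)}))"
    unfolding double_arc_eq[OF assms(2)] using stretch_neq_new_points[OF assms(1)] by auto
  also have "\<dots> = \<nu> - {(a, b)}"
    using inj_map_prod_stretch by (rule inj_vimage_image_eq)
  finally show ?thesis
    unfolding merge_arcs_def using assms(2) by auto
qed

lemma matching_inter_range_stretch:
  assumes \<mu>: "is_matching (Suc n) \<mu>"
    and outer: "(a, b + 2) \<in> \<mu>" and inner: "(Suc a, Suc b) \<in> \<mu>"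
  shows "\<mu> \<inter> range (map_prod (stretch a b) (stretch a b)) = \<mu> - {(a, b + 2), (Suc a, Suc b)}"
proof -
  let ?f = "map_prod (stretch a b) (stretch a b)"
  have pm: "perfect_matching_on {1..2 * Suc n} \<mu>"
    using \<mu> by (simp add: is_matching_iff_perfect_matching_on)
  have ab: "a < b"
    using perfect_matching_on_arcD[OF pm inner] by simp
  have "(x, y) \<in> range ?f \<longleftrightarrow> (x, y) \<noteq> (a, b + 2) \<and> (x, y) \<noteq> (Suc a, Suc b)"
    if xy: "(x, y) \<in> \<mu>" for x y
  proof
    assume "(x, y) \<in> range ?f"
    then show "(x, y) \<noteq> (a, b + 2) \<and> (x, y) \<noteq> (Suc a, Suc b)"
      unfolding range_map_prod_stretch[OF ab] by auto
  next
    assume "(x, y) \<noteq> (a, b + 2) \<and> (x, y) \<noteq> (Suc a, Suc b)"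
    then have "x \<noteq> Suc a \<and> y \<noteq> Suc a \<and> x \<noteq> b + 2 \<and> y \<noteq> b + 2"
      using perfect_matching_on_arc_eq[OF pm xy outer] perfect_matching_on_arc_eq[OF pm xy inner]
      by blast
    then show "(x, y) \<in> range ?f"
      unfolding range_map_prod_stretch[OF ab] by simp
  qed
  then show ?thesis
    by auto
qed

lemma double_arc_merge_arcs:
  assumes \<mu>: "is_matching (Suc n) \<mu>"
    and outer: "(a, b + 2) \<in> \<mu>" and inner: "(Suc a, Suc b) \<in> \<mu>"
  shows "double_arc (merge_arcs \<mu> a b) a b = \<mu>"
proof -
  let ?f = "map_prod (stretch a b) (stretch a b)"
  have ab: "a < b"
    using matching_arc_less[OF \<mu> inner] by simp
  have "(a, Suc b) \<notin> \<mu>"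
    using \<mu> perfect_matching_on_left_end_iff[OF _ outer, of "{1..2 * Suc n}" "Suc b"]
    by (simp add: is_matching_iff_perfect_matching_on)
  then have "merge_arcs \<mu> a b - {(a, b)} = ?f -` \<mu>"
    unfolding merge_arcs_def using stretch_left[OF ab] stretch_right[OF ab] by auto
  then have "?f ` (merge_arcs \<mu> a b - {(a, b)}) = \<mu> - {(a, b + 2), (Suc a, Suc b)}"
    using matching_inter_range_stretch[OF \<mu> outer inner] by simp
  moreover have "(a, b) \<in> merge_arcs \<mu> a b"
    unfolding merge_arcs_def by simp
  ultimately have "double_arc (merge_arcs \<mu> a b) a b =
      insert (a, b + 2) (insert (Suc a, Suc b) (\<mu> - {(a, b + 2), (Suc a, Suc b)}))"
    by (simp add: double_arc_eq)
  then show ?thesis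
    using outer inner by auto
qed

section \<open>Occurrences of 21 under doubling\<close>

definition inner_arc :: "nat \<times> nat \<Rightarrow> nat \<times> nat" where
  "inner_arc e = (Suc (fst e), snd e - 1)"

definition outer21 :: "(nat \<times> nat) set \<Rightarrow> (nat \<times> nat) set" where
  "outer21 \<mu> = {e \<in> \<mu>. inner_arc e \<in> \<mu>}"

lemma occ21_eq_card_outer21:
  assumes "\<forall>(x, y)\<in>\<mu>. 0 < x \<and> x < y"
  shows "occ21 \<mu> = card (outer21 \<mu>)"
proof -
  let ?O = "{(i, j). (i + 1, j + 2) \<in> \<mu> \<and> (i + 2, j + 1) \<in> \<mu>}"
  let ?g = "\<lambda>(i, j). (i + 1, j + 2)"
  have "outer21 \<mu> \<subseteq> ?g ` ?O"
  proof
    fix e assume "e \<in> outer21 \<mu>"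
    then obtain x y where e: "e = (x, y)" "(x, y) \<in> \<mu>" "(Suc x, y - 1) \<in> \<mu>"
      unfolding outer21_def inner_arc_def by (cases e) auto
    then have "0 < x" "Suc x < y - 1"
      using assms by auto
    then have "(x - 1, y - 2) \<in> ?O" "e = ?g (x - 1, y - 2)"
      using e by (auto simp: numeral_2_eq_2 Suc_diff_Suc)
    then show "e \<in> ?g ` ?O"
      by blast
  qed
  moreover have "?g ` ?O \<subseteq> outer21 \<mu>"
    unfolding outer21_def inner_arc_def by (auto simp: numeral_2_eq_2)
  ultimately have "outer21 \<mu> = ?g ` ?O"
    by (rule subset_antisym)
  moreover have "inj_on ?g ?O"
    by (rule inj_onI) auto
  ultimately show ?thesis
    unfolding occ21_def by (simp add: card_image)
qed

lemma outer21_matchingE: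
  assumes "is_matching n \<mu>" "(x, y) \<in> outer21 \<mu>"
  obtains b where "y = b + 2" "(x, b + 2) \<in> \<mu>" "(Suc x, Suc b) \<in> \<mu>"
proof -
  have arcs: "(x, y) \<in> \<mu>" "(Suc x, y - 1) \<in> \<mu>"
    using assms(2) unfolding outer21_def inner_arc_def by auto
  then have "Suc x < y - 1"
    using matching_arc_less[OF assms(1)] by blast
  then have "y = (y - 2) + 2" "y - 1 = Suc (y - 2)"
    by auto
  then show ?thesis
    using that[of "y - 2"] arcs by metis
qed

lemma inner_arc_shift_self_iff:
  assumes \<nu>: "is_matching n \<nu>" and ab: "(a, b) \<in> \<nu>"
  shows "inner_arc (arc_shift a b (a, b)) \<in> double_arc \<nu> a b \<longleftrightarrow> inner_arc (a, b) \<in> \<nu>"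
proof (cases "b = Suc a")
  case True
  have "(Suc (Suc a), Suc a) \<notin> double_arc \<nu> a b" "(Suc a, a) \<notin> \<nu>"
    using matching_arc_less[OF is_matching_double_arc[OF \<nu> ab]] matching_arc_less[OF \<nu>]
    by (meson lessI less_asym)+
  then show ?thesis
    unfolding arc_shift_def inner_arc_def using True by simp
next
  case False
  have "a < b"
    using \<nu> ab matching_arc_less by blast
  with False have "stretch a b (Suc a) = Suc (Suc a)" "stretch a b (b - 1) = b"
    unfolding stretch_def by auto
  then show ?thesis
    unfolding arc_shift_def inner_arc_def
    using stretch_mem_double_arc_iff[OF \<open>a < b\<close> ab, of "Suc a" "b - 1"] by simp
qed

lemma inner_arc_shift_other_iff:
  assumes \<nu>: "is_matching n \<nu>" and ab: "(a, b) \<in> \<nu>"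
    and xy: "(x, y) \<in> \<nu>" and ne: "(x, y) \<noteq> (a, b)"
  shows "inner_arc (arc_shift a b (x, y)) \<in> double_arc \<nu> a b \<longleftrightarrow> inner_arc (x, y) \<in> \<nu>"
proof -
  let ?s = "stretch a b"
  have pm: "perfect_matching_on {1..2 * n} \<nu>"
    using \<nu> by (simp add: is_matching_iff_perfect_matching_on)
  have pmD: "perfect_matching_on {1..2 * Suc n} (double_arc \<nu> a b)"
    using is_matching_double_arc[OF \<nu> ab] by (simp add: is_matching_iff_perfect_matching_on)
  have "a < b" "x < y"
    using perfect_matching_on_arcD[OF pm ab] perfect_matching_on_arcD[OF pm xy] by auto
  have "x \<noteq> a" "x \<noteq> b"
    using perfect_matching_on_arc_eq[OF pm xy ab] ne by blast+
  then have shift: "inner_arc (arc_shift a b (x, y)) = (?s (Suc x), ?s y - 1)"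
    unfolding arc_shift_def inner_arc_def using ne by (simp add: stretch_Suc)
  have inner: "inner_arc (x, y) = (Suc x, y - 1)"
    unfolding inner_arc_def by simp
  (* stretch commutes with y \<mapsto> y - 1 unless the inner arc would end at a or b *)
  consider "y - 1 \<noteq> a" "y - 1 \<noteq> b" | "y = Suc a" | "y = Suc b"
    using \<open>x < y\<close> by linarith
  then show ?thesis
  proof cases
    case 1
    then have "?s y - 1 = ?s (y - 1)"
      using stretch_diff_Suc \<open>x < y\<close> by simp
    then show ?thesis
      unfolding shift inner using stretch_mem_double_arc_iff[OF \<open>a < b\<close> ab] 1 by simp
  next
    case 2
    then show ?thesis
      unfolding shift inner using stretch_Suc_left[OF \<open>a < b\<close>]
        perfect_matching_on_left_end_not_right[OF pmD double_arc_mem_inner[OF ab]]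
        perfect_matching_on_left_end_not_right[OF pm ab] by simp
  next
    case 3
    then show ?thesis
      unfolding shift inner using stretch_Suc_right[OF \<open>a < b\<close>]
        perfect_matching_on_right_end_iff[OF pmD double_arc_mem_outer]
        perfect_matching_on_right_end_iff[OF pm ab] stretch_eq_left_iff[OF \<open>a < b\<close>]
      by simp
  qed
qed

lemma outer21_double_arc:
  assumes \<nu>: "is_matching n \<nu>" and ab: "(a, b) \<in> \<nu>"
  shows "outer21 (double_arc \<nu> a b) = insert (a, b + 2) (arc_shift a b ` outer21 \<nu>)"
proof -
  let ?D = "double_arc \<nu> a b"
  have shift_iff: "inner_arc (arc_shift a b e) \<in> ?D \<longleftrightarrow> inner_arc e \<in> \<nu>" if "e \<in> \<nu>" for e
    using that inner_arc_shift_self_iff[OF \<nu> ab] inner_arc_shift_other_iff[OF \<nu> ab]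
    by (cases e) auto
  have "inner_arc (a, b + 2) \<in> ?D"
    using double_arc_mem_inner[OF ab] by (simp add: inner_arc_def)
  then have "outer21 ?D = insert (a, b + 2) {e \<in> arc_shift a b ` \<nu>. inner_arc e \<in> ?D}"
    unfolding outer21_def by (auto simp: double_arc_def[of \<nu> a b])
  also have "{e \<in> arc_shift a b ` \<nu>. inner_arc e \<in> ?D} = arc_shift a b ` outer21 \<nu>"
    unfolding outer21_def using shift_iff by auto
  finally show ?thesis .
qed

lemma inj_arc_shift: "a < b \<Longrightarrow> inj (arc_shift a b)"
  unfolding inj_def arc_shift_def using stretch_neq_new_points by (auto simp: prod_eq_iff)

lemma arc_shift_neq_outer: "a < b \<Longrightarrow> arc_shift a b e \<noteq> (a, b + 2)"
  unfolding arc_shift_def using stretch_neq_new_points by (auto simp: prod_eq_iff)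

lemma occ21_double_arc:
  assumes \<nu>: "is_matching n \<nu>" and ab: "(a, b) \<in> \<nu>"
  shows "occ21 (double_arc \<nu> a b) = Suc (occ21 \<nu>)"
proof -
  have "a < b"
    using \<nu> ab matching_arc_less by blast
  have "finite (outer21 \<nu>)"
    using finite_matching[OF \<nu>] unfolding outer21_def by simp
  moreover have "(a, b + 2) \<notin> arc_shift a b ` outer21 \<nu>"
    using arc_shift_neq_outer[OF \<open>a < b\<close>] by (metis imageE)
  moreover have "card (arc_shift a b ` outer21 \<nu>) = card (outer21 \<nu>)"
    using inj_on_subset[OF inj_arc_shift[OF \<open>a < b\<close>] subset_UNIV] by (rule card_image)
  ultimately have "card (outer21 (double_arc \<nu> a b)) = Suc (card (outer21 \<nu>))"
    unfolding outer21_double_arc[OF \<nu> ab] by simp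
  then show ?thesis
    using occ21_eq_card_outer21 matching_arcs_pos \<nu> is_matching_double_arc[OF \<nu> ab] by metis
qed

section \<open>Double counting\<close>

lemma bij_betw_double_arc:
  "bij_betw (\<lambda>(\<nu>, a, b). (double_arc \<nu> a b, a, b + 2))
     (SIGMA \<nu>:{\<nu> \<in> matchings n. occ21 \<nu> = k}. \<nu>)
     (SIGMA \<mu>:{\<mu> \<in> matchings (Suc n). occ21 \<mu> = Suc k}. outer21 \<mu>)"
  (is "bij_betw ?f ?R ?L")
proof -
  let ?g = "\<lambda>(\<mu>, x, y). (merge_arcs \<mu> x (y - 2), x, y - 2)"
  have f_maps: "?f (\<nu>, a, b) \<in> ?L \<and> ?g (?f (\<nu>, a, b)) = (\<nu>, a, b)"
    if "(\<nu>, a, b) \<in> ?R" for \<nu> a b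
  proof -
    have \<nu>: "is_matching n \<nu>" "occ21 \<nu> = k" and ab: "(a, b) \<in> \<nu>"
      using that unfolding matchings_def by auto
    then show ?thesis
      using is_matching_double_arc[OF \<nu>(1) ab] occ21_double_arc[OF \<nu>(1) ab]
        outer21_double_arc[OF \<nu>(1) ab] merge_arcs_double_arc[OF matching_arc_less[OF \<nu>(1) ab] ab]
      unfolding matchings_def by simp
  qed
  have g_maps: "?g (\<mu>, x, y) \<in> ?R \<and> ?f (?g (\<mu>, x, y)) = (\<mu>, x, y)"
    if "(\<mu>, x, y) \<in> ?L" for \<mu> x y
  proof -
    have \<mu>: "is_matching (Suc n) \<mu>" "occ21 \<mu> = Suc k" and xy: "(x, y) \<in> outer21 \<mu>"
      using that unfolding matchings_def by auto
    obtain b where b: "y = b + 2" "(x, b + 2) \<in> \<mu>" "(Suc x, Suc b) \<in> \<mu>"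
      using outer21_matchingE[OF \<mu>(1) xy] .
    have merged: "is_matching n (merge_arcs \<mu> x b)"
      using is_matching_merge_arcs[OF \<mu>(1) b(2,3)] .
    have xb: "(x, b) \<in> merge_arcs \<mu> x b"
      unfolding merge_arcs_def by simp
    have inverse: "double_arc (merge_arcs \<mu> x b) x b = \<mu>"
      using double_arc_merge_arcs[OF \<mu>(1) b(2,3)] .
    then have "occ21 (merge_arcs \<mu> x b) = k"
      using occ21_double_arc[OF merged xb] \<mu>(2) by simp
    then show ?thesis
      using merged xb inverse b(1) unfolding matchings_def by simp
  qed
  show ?thesis
  proof (rule bij_betw_byWitness[where f' = ?g])
    show "\<forall>e\<in>?R. ?g (?f e) = e" "?f ` ?R \<subseteq> ?L"
      using f_maps by auto
    show "\<forall>e\<in>?L. ?f (?g e) = e" "?g ` ?L \<subseteq> ?R"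
      using g_maps by auto
  qed
qed

lemma a_nk_Suc_Suc: "Suc k * a_nk (Suc n) (Suc k) = n * a_nk n k"
proof -
  let ?A = "{\<mu> \<in> matchings (Suc n). occ21 \<mu> = Suc k}"
  let ?B = "{\<nu> \<in> matchings n. occ21 \<nu> = k}"
  have "card (SIGMA \<mu>:?A. outer21 \<mu>) = (\<Sum>\<mu>\<in>?A. Suc k)"
  proof (rule trans[OF card_SigmaI sum.cong])
    show "card (outer21 \<mu>) = Suc k" if "\<mu> \<in> ?A" for \<mu>
      using that occ21_eq_card_outer21 matching_arcs_pos unfolding matchings_def by auto
    show "\<forall>\<mu>\<in>?A. finite (outer21 \<mu>)"
      using finite_matching unfolding matchings_def outer21_def by auto
  qed (use finite_matchings in simp_all)
  moreover have "card (SIGMA \<nu>:?B. \<nu>) = (\<Sum>\<nu>\<in>?B. n)"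
  proof (rule trans[OF card_SigmaI sum.cong])
    show "card \<nu> = n" if "\<nu> \<in> ?B" for \<nu>
      using that card_matching unfolding matchings_def by simp
    show "\<forall>\<nu>\<in>?B. finite \<nu>"
      using finite_matching unfolding matchings_def by blast
  qed (use finite_matchings in simp_all)
  moreover have "card (SIGMA \<nu>:?B. \<nu>) = card (SIGMA \<mu>:?A. outer21 \<mu>)"
    using bij_betw_double_arc by (rule bij_betw_same_card)
  ultimately show ?thesis
    unfolding a_nk_def by (simp add: algebra_simps)
qed

theorem lemma2:
  fixes n k :: nat
  assumes "n > k"
  shows "a_nk n k = ((n - 1) choose k) * a_nk (n - k) 0"
  using assms
proof (induction k arbitrary: n)
  case 0
  then show ?case by simp
next
  case (Suc k)
  then obtain m where m: "n = Suc m" "k < m"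
    by (cases n) auto
  have "Suc k * a_nk n (Suc k) = m * a_nk m k"
    unfolding m(1) by (rule a_nk_Suc_Suc)
  also have "\<dots> = m * ((m - 1) choose k) * a_nk (m - k) 0"
    using Suc.IH[OF m(2)] by simp
  also have "\<dots> = Suc k * ((m choose Suc k) * a_nk (m - k) 0)"
    using Suc_times_binomial_eq[of "m - 1" k] m(2) by (simp add: algebra_simps)
  finally have "a_nk n (Suc k) = (m choose Suc k) * a_nk (m - k) 0"
    by (simp only: mult_left_cancel[OF nat.distinct(2)])
  then show ?case
    using m(1) by simp
qed

end
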